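(* Let $(\Omega,\mathcal F,P)$ be a probability space and $(\theta_k)_{k\in\mathbb{Z}^d}$ a $d$-parameter group of $P$-preserving transformations such that $P$ is strongly mixing with respect to $(\theta_k)_{k\in\mathbb{Z}^d}$. Let $I$ be a set and $(k_n(t))_{n\in\mathbb{N}}$, $t\in I$, a family of $\mathbb{Z}^d$-valued sequences such that for all $m\in\mathbb{N}$ $$\lim_{n\to\infty}\frac1{n^2}\sup_{t\in I}\big|\{1\le i,j\le n:\ \|k_i(t)-k_j(t)\|\le m\}\big|=0.$$ Then for every $1\le p<\infty$ and every $f\in L^p(\Omega,\mathcal F,P)$, $$\sup_{t\in I}\Big\|\frac1n\sum_{i=0}^{n-1}f\circ\theta_{k_i(t)}-E[f]\Big\|_{L^p(P)}\to0\quad(n\to\infty).$$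
   Context: $\|\cdot\|$ is the maximum norm on $\mathbb{Z}^d$. A $d$-parameter group of $P$-preserving transformations: each $\theta_k$ measurable and $P$-preserving, $\theta_0=\mathrm{Id}$, $\theta_k\circ\theta_l=\theta_{k+l}$, $\theta_{-k}=\theta_k^{-1}$. $P$ is strongly mixing w.r.t. $(\theta_k)$ if $P(A\cap\theta_k^{-1}B)\to P(A)P(B)$ as $\|k\|\to\infty$, for all $A,B\in\mathcal F$. $E$ denotes expectation w.r.t. $P$. *)

theory Defs
  imports "HOL-Probability.Probability"
begin

text \<open>Maximum norm on Z^d, with Z^d rendered as int ^ 'd for a finite index type 'd.\<close>
definition maxnorm :: "int ^ 'd \<Rightarrow> int" where
  "maxnorm k = Max (range (\<lambda>i. \<bar>k $ i\<bar>))"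

definition dparam_group :: "'a measure \<Rightarrow> (int ^ 'd \<Rightarrow> 'a \<Rightarrow> 'a) \<Rightarrow> bool" where
  "dparam_group M \<theta> \<longleftrightarrow>
     (\<forall>k. \<theta> k \<in> M \<rightarrow>\<^sub>M M \<and> distr M M (\<theta> k) = M) \<and>
     (\<forall>x\<in>space M. \<theta> 0 x = x) \<and>
     (\<forall>k l. \<forall>x\<in>space M. \<theta> k (\<theta> l x) = \<theta> (k + l) x) \<and>
     (\<forall>k. \<forall>x\<in>space M. \<theta> (- k) (\<theta> k x) = x \<and> \<theta> k (\<theta> (- k) x) = x)"

definition strongly_mixing :: "'a measure \<Rightarrow> (int ^ 'd \<Rightarrow> 'a \<Rightarrow> 'a) \<Rightarrow> bool" where
  "strongly_mixing M \<theta> \<longleftrightarrow>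
     (\<forall>A\<in>sets M. \<forall>B\<in>sets M. \<forall>\<epsilon>>0. \<exists>R. \<forall>k. maxnorm k > R \<longrightarrow>
        \<bar>measure M (A \<inter> (\<theta> k -` B \<inter> space M)) - measure M A * measure M B\<bar> < \<epsilon>)"

definition Lp_norm :: "'a measure \<Rightarrow> real \<Rightarrow> ('a \<Rightarrow> real) \<Rightarrow> real" where
  "Lp_norm M p g = (integral\<^sup>L M (\<lambda>x. \<bar>g x\<bar> powr p)) powr (1 / p)"

definition in_Lp :: "'a measure \<Rightarrow> real \<Rightarrow> ('a \<Rightarrow> real) \<Rightarrow> bool" where
  "in_Lp M p f \<longleftrightarrow> f \<in> borel_measurable M \<and> integrable M (\<lambda>x. \<bar>f x\<bar> powr p)"

end

theory Submission
  imports Defs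
begin

text \<open>
  For bounded \<open>f\<close> with centred version \<open>h = f - E f\<close>, the second moment of the average of the
  shifted copies \<open>h \<circ> \<theta>\<^bsub>k\<^sub>i\<^esub>\<close> is the mean of the correlations \<open>E[h \<cdot> h \<circ> \<theta>\<^sub>v]\<close> over the differences
  \<open>v = k\<^sub>j - k\<^sub>i\<close>. Strong mixing makes these correlations tend to \<open>(E h)\<^sup>2 = 0\<close> as
  \<open>\<parallel>v\<parallel> \<rightarrow> \<infinity>\<close> (for simple functions directly, for bounded ones by uniform approximation), and
  the hypothesis says that the pairs with \<open>\<parallel>k\<^sub>i - k\<^sub>j\<parallel> \<le> m\<close> are a vanishing fraction of all
  pairs. On a bounded range the \<open>p\<close>-th moment is controlled by the second one. A general
  \<open>f \<in> L\<^sup>p\<close> is truncated: the tail is small in \<open>L\<^sup>p\<close>, and since the \<open>\<theta>\<^sub>k\<close> preserve \<open>P\<close>,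
  averaging it along the shifts does not increase its \<open>L\<^sup>p\<close> norm.
\<close>

lemma convex_on_powr_nonneg:
  assumes p: "(p::real) \<ge> 1"
  shows "convex_on {0..} (\<lambda>x::real. x powr p)"
proof (rule convex_onI)
  show "convex {0::real..}" by simp
  fix t x y :: real assume t: "0 < t" "t < 1" and xy: "x \<in> {0..}" "y \<in> {0..}"
  have tp: "t powr p \<le> t" using powr_mono'[of 1 p t] t p by simp
  have tp': "(1-t) powr p \<le> 1 - t" using powr_mono'[of 1 p "1-t"] t p by simp
  show "((1 - t) *\<^sub>R x + t *\<^sub>R y) powr p \<le> (1 - t) * x powr p + t * y powr p"
  proof (cases "x = 0 \<or> y = 0")
    case True
    then show ?thesis
    proof
      assume "x = 0"
      have "(t * y) powr p = t powr p * y powr p" using t xy by (simp add: powr_mult)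
      also have "\<dots> \<le> t * y powr p" using tp by (simp add: mult_right_mono)
      finally show ?thesis using \<open>x = 0\<close> by simp
    next
      assume "y = 0"
      have "((1-t) * x) powr p = (1-t) powr p * x powr p" using t xy by (simp add: powr_mult)
      also have "\<dots> \<le> (1-t) * x powr p" using tp' by (simp add: mult_right_mono)
      finally show ?thesis using \<open>y = 0\<close> by simp
    qed
  next
    case False
    then show ?thesis using xy t convex_onD[OF powr_convex[OF p], of t x y] by auto
  qed
qed

lemma abs_mean_powr_le:
  assumes p: "(p::real) \<ge> 1" and S: "finite S" "S \<noteq> {}"
  shows "\<bar>(\<Sum>i\<in>S. y i) / card S\<bar> powr p \<le> (\<Sum>i\<in>S. \<bar>y i\<bar> powr p) / card S"
proof -
  have c: "real (card S) > 0" using S by (simp add: card_gt_0_iff)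
  have "\<bar>(\<Sum>i\<in>S. y i) / card S\<bar> \<le> (\<Sum>i\<in>S. \<bar>y i\<bar>) / card S"
    using c by (simp add: divide_right_mono sum_abs)
  also have "\<dots> = (\<Sum>i\<in>S. (1 / card S) *\<^sub>R \<bar>y i\<bar>)"
    by (simp add: sum_divide_distrib)
  finally have "\<bar>(\<Sum>i\<in>S. y i) / card S\<bar> powr p \<le> (\<Sum>i\<in>S. (1 / card S) *\<^sub>R \<bar>y i\<bar>) powr p"
    using p by (intro powr_mono2) auto
  also have "\<dots> \<le> (\<Sum>i\<in>S. (1 / card S) * \<bar>y i\<bar> powr p)"
    using S c by (intro convex_on_sum[OF S convex_on_powr_nonneg[OF p]]) auto
  also have "\<dots> = (\<Sum>i\<in>S. \<bar>y i\<bar> powr p) / card S"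
    by (simp add: sum_divide_distrib)
  finally show ?thesis .
qed

lemma abs_add3_powr_le:
  assumes p: "(p::real) \<ge> 1"
  shows "\<bar>a + b + c\<bar> powr p \<le> 3 powr (p - 1) * (\<bar>a\<bar> powr p + \<bar>b\<bar> powr p + \<bar>c\<bar> powr p)"
proof -
  let ?y = "\<lambda>i::nat. if i = 0 then a else if i = 1 then b else c"
  have "\<bar>(\<Sum>i<3. ?y i) / card {..<3::nat}\<bar> powr p \<le> (\<Sum>i<3. \<bar>?y i\<bar> powr p) / card {..<3::nat}"
    by (rule abs_mean_powr_le[OF p]) (auto simp: numeral_3_eq_3)
  then have "\<bar>a + b + c\<bar> powr p / 3 powr p \<le> (\<bar>a\<bar> powr p + \<bar>b\<bar> powr p + \<bar>c\<bar> powr p) / 3"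
    by (simp add: numeral_3_eq_3 powr_divide)
  then have "\<bar>a + b + c\<bar> powr p \<le> 3 powr p / 3 * (\<bar>a\<bar> powr p + \<bar>b\<bar> powr p + \<bar>c\<bar> powr p)"
    by (simp add: divide_simps mult.commute)
  then show ?thesis
    by (simp add: powr_diff)
qed

lemma abs_powr_le_square:
  assumes p: "(p::real) \<ge> 1" and eta: "\<eta> > 0" and x: "\<bar>x\<bar> \<le> C"
  shows "\<bar>x\<bar> powr p \<le> \<eta> powr p + (\<eta> powr (p - 2) + C powr (p - 2)) * x\<^sup>2"
proof (cases "\<bar>x\<bar> \<le> \<eta>")
  case True
  then have "\<bar>x\<bar> powr p \<le> \<eta> powr p" using p by (intro powr_mono2) auto
  then show ?thesis by (simp add: add_increasing2)
next
  case False
  then have xp: "\<bar>x\<bar> > 0" using eta by auto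
  have "\<bar>x\<bar> powr p = \<bar>x\<bar> powr (2 + (p - 2))" by simp
  also have "\<dots> = \<bar>x\<bar> powr 2 * \<bar>x\<bar> powr (p - 2)" by (rule powr_add)
  also have "\<bar>x\<bar> powr 2 = x\<^sup>2" using xp by (simp add: powr_numeral)
  finally have split: "\<bar>x\<bar> powr p = x\<^sup>2 * \<bar>x\<bar> powr (p - 2)" .
  have "\<bar>x\<bar> powr (p - 2) \<le> \<eta> powr (p - 2) + C powr (p - 2)"
  proof (cases "p \<ge> 2")
    case True
    then have "\<bar>x\<bar> powr (p - 2) \<le> C powr (p - 2)" using x by (intro powr_mono2) auto
    then show ?thesis by (simp add: add_increasing)
  next
    case False
    then have "\<bar>x\<bar> powr (p - 2) \<le> \<eta> powr (p - 2)"
      using xp eta \<open>\<not> \<bar>x\<bar> \<le> \<eta>\<close> by (intro powr_mono2') auto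
    then show ?thesis by (simp add: add_increasing2)
  qed
  then have "x\<^sup>2 * \<bar>x\<bar> powr (p - 2) \<le> (\<eta> powr (p - 2) + C powr (p - 2)) * x\<^sup>2"
    by (simp add: mult.commute mult_left_mono)
  then show ?thesis using split by (simp add: add_increasing)
qed

lemma abs_mult_sub_mult_le:
  fixes a b a' b' d B :: real
  assumes "\<bar>a - a'\<bar> \<le> d" "\<bar>b - b'\<bar> \<le> d" "\<bar>b\<bar> \<le> B" "\<bar>a'\<bar> \<le> B + d"
  shows "\<bar>a * b - a' * b'\<bar> \<le> d * (2 * B + d)"
proof -
  have "a * b - a' * b' = (a - a') * b + a' * (b - b')" by (simp add: algebra_simps)
  then have "\<bar>a * b - a' * b'\<bar> \<le> \<bar>a - a'\<bar> * \<bar>b\<bar> + \<bar>a'\<bar> * \<bar>b - b'\<bar>"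
    by (simp add: abs_mult[symmetric] abs_triangle_ineq)
  also have "\<dots> \<le> d * B + (B + d) * d"
    using assms by (intro add_mono mult_mono) auto
  finally show ?thesis by (simp add: algebra_simps)
qed

lemma SUP_ennreal_LIMSEQ_zeroI:
  fixes F :: "nat \<Rightarrow> 't \<Rightarrow> real"
  assumes "\<And>\<epsilon>. \<epsilon> > 0 \<Longrightarrow> \<exists>N. \<forall>n\<ge>N. \<forall>t\<in>I. F n t \<le> \<epsilon>"
  shows "(\<lambda>n. SUP t\<in>I. ennreal (F n t)) \<longlonglongrightarrow> 0"
proof (rule order_tendstoI)
  fix y :: ennreal assume "0 < y"
  then obtain z where z: "0 < z" "z < y" using dense by blast
  then have "z < top" using order.strict_trans2 top_greatest by blast
  with z obtain r where r: "0 < r" "ennreal r < y"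
    by (intro that[of "enn2real z"]) (auto simp: enn2real_positive_iff less_top[symmetric])
  obtain N where N: "\<forall>n\<ge>N. \<forall>t\<in>I. F n t \<le> r" using assms r by blast
  have "(SUP t\<in>I. ennreal (F n t)) \<le> ennreal r" if "n \<ge> N" for n
    using N that by (intro SUP_least ennreal_leI) auto
  then show "\<forall>\<^sub>F n in sequentially. (SUP t\<in>I. ennreal (F n t)) < y"
    unfolding eventually_sequentially using r by (meson order.strict_trans1)
qed simp

lemma SUP_ennreal_LIMSEQ_zeroD:
  fixes F :: "nat \<Rightarrow> 't \<Rightarrow> real"
  assumes "(\<lambda>n. SUP t\<in>I. ennreal (F n t)) \<longlonglongrightarrow> 0" "\<epsilon> > 0"
  shows "\<exists>N. \<forall>n\<ge>N. \<forall>t\<in>I. F n t < \<epsilon>"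
proof -
  obtain N where N: "\<And>n. n \<ge> N \<Longrightarrow> (SUP t\<in>I. ennreal (F n t)) < ennreal \<epsilon>"
    using order_tendstoD(2)[OF assms(1), of "ennreal \<epsilon>"] assms(2)
    unfolding eventually_sequentially by auto
  have "F n t < \<epsilon>" if "n \<ge> N" "t \<in> I" for n t
  proof -
    have "ennreal (F n t) < ennreal \<epsilon>"
      using N[OF that(1)] SUP_upper[OF that(2), of "\<lambda>t. ennreal (F n t)"] by auto
    then show ?thesis using assms(2) by (cases "F n t \<ge> 0") (auto simp: ennreal_less_iff)
  qed
  then show ?thesis by blast
qed

lemma maxnorm_minus: "maxnorm (- v) = maxnorm v"
  unfolding maxnorm_def by simp

definition close_pairs :: "(nat \<Rightarrow> int ^ 'd) \<Rightarrow> nat \<Rightarrow> nat \<Rightarrow> (nat \<times> nat) set" where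
  "close_pairs a m n = {(i, j). i < n \<and> j < n \<and> maxnorm (a j - a i) \<le> int m}"

text \<open>The hypothesis of the theorem counts pairs in \<open>{1..n}\<close>, the averages run over \<open>{0..<n}\<close>;
  the pairs involving index \<open>0\<close> are at most \<open>2 n\<close>.\<close>
lemma card_close_pairs_le:
  "card (close_pairs a m n)
     \<le> 2 * n + card {(i, j). i \<in> {1..n} \<and> j \<in> {1..n} \<and> maxnorm (a i - a j) \<le> int m}"
proof -
  let ?S = "{(i, j). i \<in> {1..n} \<and> j \<in> {1..n} \<and> maxnorm (a i - a j) \<le> int m}"
  have "finite ?S"
    by (rule finite_subset[of _ "{1..n} \<times> {1..n}"]) auto
  have "close_pairs a m n \<subseteq> ({0} \<times> {..<n} \<union> {..<n} \<times> {0}) \<union> ?S"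
  proof
    fix x assume "x \<in> close_pairs a m n"
    then obtain i j where "x = (i, j)" "i < n" "j < n" "maxnorm (a j - a i) \<le> int m"
      by (auto simp: close_pairs_def)
    then show "x \<in> ({0} \<times> {..<n} \<union> {..<n} \<times> {0}) \<union> ?S"
      using maxnorm_minus[of "a j - a i"] by auto
  qed
  then have "card (close_pairs a m n) \<le> card (({0} \<times> {..<n} \<union> {..<n} \<times> {0}) \<union> ?S)"
    using \<open>finite ?S\<close> by (intro card_mono) auto
  also have "\<dots> \<le> card ({0} \<times> {..<n} \<union> {..<n} \<times> {0}) + card ?S"
    by (rule card_Un_le)
  also have "card ({0} \<times> {..<n} \<union> {..<n} \<times> {0::nat}) \<le> 2 * n"
    using card_Un_le[of "{0} \<times> {..<n}" "{..<n} \<times> {0::nat}"] by (simp add: card_cartesian_product)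
  finally show ?thesis by simp
qed

lemma sum_of_bool_close_pairs:
  "(\<Sum>i<n. \<Sum>j<n. of_bool (maxnorm (a j - a i) \<le> int m)) = real (card (close_pairs a m n))"
proof -
  have close: "{..<n} \<times> {..<n} \<inter> {(i, j). maxnorm (a j - a i) \<le> int m} = close_pairs a m n"
    by (auto simp: close_pairs_def)
  have "(\<Sum>i<n. \<Sum>j<n. of_bool (maxnorm (a j - a i) \<le> int m))
      = (\<Sum>(i, j)\<in>{..<n} \<times> {..<n}. of_bool (maxnorm (a j - a i) \<le> int m) :: real)"
    by (rule sum.cartesian_product)
  also have "\<dots> = real (card (close_pairs a m n))"
    using close by (simp add: case_prod_unfold)
  finally show ?thesis .
qed

lemma close_pairs_fraction_le:
  assumes "n > 0"
  shows "card (close_pairs a m n) / (real n)\<^sup>2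
    \<le> 2 / real n + card {(i, j). i \<in> {1..n} \<and> j \<in> {1..n} \<and> maxnorm (a i - a j) \<le> int m} / (real n)\<^sup>2"
proof -
  let ?c = "card {(i, j). i \<in> {1..n} \<and> j \<in> {1..n} \<and> maxnorm (a i - a j) \<le> int m}"
  have "real (card (close_pairs a m n)) \<le> real (2 * n + ?c)"
    using card_close_pairs_le by (simp only: of_nat_le_iff)
  then have "card (close_pairs a m n) / (real n)\<^sup>2 \<le> (2 * real n + ?c) / (real n)\<^sup>2"
    by (simp add: divide_right_mono)
  also have "\<dots> = 2 / real n + ?c / (real n)\<^sup>2"
    using assms by (simp add: field_simps power2_eq_square)
  finally show ?thesis .
qed

definition sparse_returns :: "'t set \<Rightarrow> ('t \<Rightarrow> nat \<Rightarrow> int ^ 'd) \<Rightarrow> bool" where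
  "sparse_returns I k \<longleftrightarrow> (\<forall>m::nat. (\<lambda>n::nat. SUP t\<in>I. ennreal (real (card {(i, j). i \<in> {1..n} \<and>
     j \<in> {1..n} \<and> maxnorm (k t i - k t j) \<le> int m}) / (real n)\<^sup>2)) \<longlonglongrightarrow> 0)"

lemma simple_approx_bounded:
  fixes M :: "'a measure" and g :: "'a \<Rightarrow> real"
  assumes [measurable]: "g \<in> borel_measurable M" and gb: "\<And>x. x \<in> space M \<Longrightarrow> \<bar>g x\<bar> \<le> B"
    and \<delta>: "\<delta> > 0"
  obtains J :: "int set" and A :: "int \<Rightarrow> 'a set" and c :: "int \<Rightarrow> real"
  where "finite J" "\<And>j. A j \<in> sets M"
    "\<And>x. x \<in> space M \<Longrightarrow> \<bar>g x - (\<Sum>j\<in>J. c j * indicator (A j) x)\<bar> \<le> \<delta>"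
proof
  define q where "q x = \<lfloor>g x / \<delta>\<rfloor>" for x
  define K where "K = \<lceil>\<bar>B\<bar> / \<delta>\<rceil>"
  define A where "A j = {x\<in>space M. q x = j}" for j
  show "finite {-K..K}" by simp
  show "A j \<in> sets M" for j unfolding A_def q_def by measurable
  fix x assume x: "x \<in> space M"
  have "real_of_int (q x) \<le> g x / \<delta>" "g x / \<delta> < real_of_int (q x) + 1"
    unfolding q_def by (rule of_int_floor_le, rule real_of_int_floor_add_one_gt)
  then have q: "\<delta> * q x \<le> g x" "g x < \<delta> * q x + \<delta>"
    using \<delta> by (simp_all add: field_simps)
  have "- \<bar>B\<bar> \<le> g x" "g x \<le> \<bar>B\<bar>" using gb[OF x] by auto
  then have "- \<bar>B\<bar> / \<delta> \<le> g x / \<delta>" "g x / \<delta> \<le> \<bar>B\<bar> / \<delta>"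
    using \<delta> divide_right_mono[of "- \<bar>B\<bar>" "g x" \<delta>] by (simp_all add: divide_right_mono)
  moreover have "\<bar>B\<bar> / \<delta> \<le> K" unfolding K_def by (rule le_of_int_ceiling)
  ultimately have "real_of_int (q x) \<le> real_of_int K" "real_of_int (- K) < real_of_int (q x + 1)"
    using \<open>real_of_int (q x) \<le> g x / \<delta>\<close> \<open>g x / \<delta> < real_of_int (q x) + 1\<close> by auto
  then have "q x \<in> {-K..K}" by simp
  then have "(\<Sum>j\<in>{-K..K}. \<delta> * of_int j * indicator (A j) x) = \<delta> * q x"
    using x by (simp add: A_def indicator_def if_distrib sum.delta cong: if_cong)
  then show "\<bar>g x - (\<Sum>j\<in>{-K..K}. \<delta> * of_int j * indicator (A j) x)\<bar> \<le> \<delta>"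
    using q by simp
qed

context prob_space
begin

lemma integrable_bounded:
  fixes f :: "'a \<Rightarrow> real"
  assumes "f \<in> borel_measurable M" "\<And>x. x \<in> space M \<Longrightarrow> \<bar>f x\<bar> \<le> C"
  shows "integrable M f"
  using assms by (intro integrable_const_bound[where B=C]) auto

lemma abs_integral_le_bound:
  fixes f :: "'a \<Rightarrow> real"
  assumes "f \<in> borel_measurable M" "\<And>x. x \<in> space M \<Longrightarrow> \<bar>f x\<bar> \<le> C"
  shows "\<bar>\<integral>x. f x \<partial>M\<bar> \<le> C"
proof -
  have "\<bar>\<integral>x. f x \<partial>M\<bar> \<le> (\<integral>x. \<bar>f x\<bar> \<partial>M)" by (rule integral_abs_bound)
  also have "\<dots> \<le> C"
    using assms integrable_bounded[OF assms] by (intro integral_le_const) auto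
  finally show ?thesis .
qed

lemma integrable_if_integrable_abs_powr:
  fixes f :: "'a \<Rightarrow> real"
  assumes p: "p \<ge> 1" and [measurable]: "f \<in> borel_measurable M"
    and fp: "integrable M (\<lambda>x. \<bar>f x\<bar> powr p)"
  shows "integrable M f"
proof (rule Bochner_Integration.integrable_bound[where f="\<lambda>x. 1 + \<bar>f x\<bar> powr p"])
  have "\<bar>f x\<bar> \<le> 1 + \<bar>f x\<bar> powr p" for x
  proof (cases "\<bar>f x\<bar> \<le> 1")
    case False
    then have "\<bar>f x\<bar> powr 1 \<le> \<bar>f x\<bar> powr p" using p by (intro powr_mono) auto
    then show ?thesis using False by simp
  qed (simp add: add_increasing2)
  then show "AE x in M. norm (f x) \<le> norm (1 + \<bar>f x\<bar> powr p)" by simp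
qed (use fp in simp_all)

lemma truncation_approx:
  fixes f :: "'a \<Rightarrow> real"
  assumes p: "p \<ge> 1" and [measurable]: "f \<in> borel_measurable M"
    and fp: "integrable M (\<lambda>x. \<bar>f x\<bar> powr p)" and \<epsilon>: "\<epsilon> > 0"
  obtains g :: "'a \<Rightarrow> real" and C where "g \<in> borel_measurable M" "\<And>x. \<bar>g x\<bar> \<le> C"
    "integrable M (\<lambda>x. \<bar>f x - g x\<bar> powr p)"
    "(\<integral>x. \<bar>f x - g x\<bar> powr p \<partial>M) < \<epsilon>" "\<bar>\<integral>x. f x - g x \<partial>M\<bar> powr p < \<epsilon>"
proof -
  define d where "d j x = f x - max (- real j) (min (real j) (f x))" for j :: nat and x
  have [measurable]: "d j \<in> borel_measurable M" for j unfolding d_def by measurable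
  have d_le: "\<bar>d j x\<bar> \<le> \<bar>f x\<bar>" for j x unfolding d_def by (auto simp: max_def min_def)
  have d_eventually_0: "\<forall>\<^sub>F j in sequentially. d j x = 0" for x
    unfolding eventually_sequentially d_def
    by (rule exI[of _ "nat \<lceil>\<bar>f x\<bar>\<rceil>"]) (auto simp: max_def min_def)
  have "(\<lambda>j. \<integral>x. \<bar>d j x\<bar> powr p \<partial>M) \<longlonglongrightarrow> (\<integral>x. 0 \<partial>M)"
  proof (rule integral_dominated_convergence[where w="\<lambda>x. \<bar>f x\<bar> powr p"])
    show "AE x in M. (\<lambda>j. \<bar>d j x\<bar> powr p) \<longlonglongrightarrow> 0"
      using d_eventually_0 by (auto intro!: tendsto_eventually elim: eventually_mono)
    show "AE x in M. norm (\<bar>d j x\<bar> powr p) \<le> \<bar>f x\<bar> powr p" for j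
      using d_le p by (auto intro!: powr_mono2)
  qed (use fp in auto)
  then have ev1: "\<forall>\<^sub>F j in sequentially. (\<integral>x. \<bar>d j x\<bar> powr p \<partial>M) < \<epsilon>"
    using \<epsilon> by (simp add: order_tendstoD(2))
  have lim2: "(\<lambda>j. \<integral>x. d j x \<partial>M) \<longlonglongrightarrow> (\<integral>x. 0 \<partial>M)"
  proof (rule integral_dominated_convergence[where w="\<lambda>x. \<bar>f x\<bar>"])
    show "AE x in M. (\<lambda>j. d j x) \<longlonglongrightarrow> 0"
      using d_eventually_0 by (auto intro: tendsto_eventually)
  qed (use d_le integrable_if_integrable_abs_powr[OF p _ fp] in auto)
  have ev2: "\<forall>\<^sub>F j in sequentially. \<bar>\<integral>x. d j x \<partial>M\<bar> < \<epsilon> powr (1 / p)"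
    using tendstoD[OF lim2, of "\<epsilon> powr (1 / p)"] \<epsilon> by (simp add: dist_real_def)
  obtain j where j1: "(\<integral>x. \<bar>d j x\<bar> powr p \<partial>M) < \<epsilon>" and j2: "\<bar>\<integral>x. d j x \<partial>M\<bar> < \<epsilon> powr (1 / p)"
    using eventually_happens'[OF _ eventually_conj[OF ev1 ev2]] by auto
  show ?thesis
  proof (rule that[of "\<lambda>x. max (- real j) (min (real j) (f x))" "real j"])
    show "integrable M (\<lambda>x. \<bar>f x - max (- real j) (min (real j) (f x))\<bar> powr p)"
      using d_le p by (intro Bochner_Integration.integrable_bound[OF fp])
        (auto simp flip: d_def intro!: powr_mono2)
    have "\<bar>\<integral>x. d j x \<partial>M\<bar> powr p < (\<epsilon> powr (1 / p)) powr p"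
      using j2 p by (intro powr_less_mono2) auto
    then show "\<bar>\<integral>x. f x - max (- real j) (min (real j) (f x)) \<partial>M\<bar> powr p < \<epsilon>"
      using \<epsilon> p by (simp add: d_def powr_powr)
  qed (use j1 in \<open>auto simp: d_def\<close>)
qed

end

definition maxnorm_at_top :: "(int ^ 'd) filter" where
  "maxnorm_at_top = filtercomap maxnorm at_top"

lemma eventually_maxnorm_at_top:
  "eventually P maxnorm_at_top \<longleftrightarrow> (\<exists>R. \<forall>v. maxnorm v \<ge> R \<longrightarrow> P v)"
  unfolding maxnorm_at_top_def by (rule eventually_filtercomap_at_top_linorder)

locale mixing_action = prob_space M for M :: "'a measure" +
  fixes \<theta> :: "int ^ 'd \<Rightarrow> 'a \<Rightarrow> 'a"
  assumes dparam_group: "dparam_group M \<theta>" and strongly_mixing: "strongly_mixing M \<theta>"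
begin

lemma measurable_shift [measurable]: "\<theta> v \<in> M \<rightarrow>\<^sub>M M"
  using dparam_group unfolding dparam_group_def by blast

lemma distr_shift: "distr M M (\<theta> v) = M"
  using dparam_group unfolding dparam_group_def by blast

lemma shift_shift: "x \<in> space M \<Longrightarrow> \<theta> a (\<theta> b x) = \<theta> (a + b) x"
  using dparam_group unfolding dparam_group_def by blast

lemma shift_in_space: "x \<in> space M \<Longrightarrow> \<theta> v x \<in> space M"
  by (rule measurable_space[OF measurable_shift])

lemma integral_shift:
  fixes h :: "'a \<Rightarrow> real"
  assumes "h \<in> borel_measurable M"
  shows "(\<integral>x. h (\<theta> v x) \<partial>M) = (\<integral>x. h x \<partial>M)"
  using integral_distr[OF measurable_shift assms, of v] by (simp add: distr_shift)

lemma integrable_shift: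
  fixes h :: "'a \<Rightarrow> real"
  assumes "integrable M h"
  shows "integrable M (\<lambda>x. h (\<theta> v x))"
  using integrable_distr_eq[OF measurable_shift, of h v] assms by (simp add: distr_shift)

lemma measure_shift_tendsto:
  assumes "A \<in> sets M" "B \<in> sets M"
  shows "((\<lambda>v. measure M (A \<inter> (\<theta> v -` B \<inter> space M))) \<longlongrightarrow> measure M A * measure M B)
           maxnorm_at_top"
proof (rule tendstoI)
  fix e :: real assume "e > 0"
  then obtain R where "\<And>v. maxnorm v > R \<Longrightarrow>
      \<bar>measure M (A \<inter> (\<theta> v -` B \<inter> space M)) - measure M A * measure M B\<bar> < e"
    using strongly_mixing assms unfolding strongly_mixing_def by blast
  then show "\<forall>\<^sub>F v in maxnorm_at_top.
      dist (measure M (A \<inter> (\<theta> v -` B \<inter> space M))) (measure M A * measure M B) < e"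
    unfolding eventually_maxnorm_at_top dist_real_def by (intro exI[of _ "R + 1"]) auto
qed

lemma correlation_simple_tendsto:
  fixes c :: "'j \<Rightarrow> real"
  assumes J: "finite J" and A: "\<And>j. j \<in> J \<Longrightarrow> A j \<in> sets M"
  defines "s \<equiv> \<lambda>x. \<Sum>j\<in>J. c j * indicator (A j) x"
  shows "((\<lambda>v. \<integral>x. s x * s (\<theta> v x) \<partial>M) \<longlongrightarrow> (\<integral>x. s x \<partial>M)\<^sup>2) maxnorm_at_top"
proof -
  define AB where "AB v j l = A j \<inter> (\<theta> v -` A l \<inter> space M)" for v j l
  have AB: "AB v j l \<in> sets M" if "j \<in> J" "l \<in> J" for v j l
    unfolding AB_def using A that measurable_sets[OF measurable_shift] by blast
  have "s x * s (\<theta> v x) = (\<Sum>j\<in>J. \<Sum>l\<in>J. c j * c l * indicator (AB v j l) x)"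
    if "x \<in> space M" for v x
    unfolding s_def sum_product AB_def using that
    by (intro sum.cong refl) (auto simp: indicator_def)
  then have "(\<integral>x. s x * s (\<theta> v x) \<partial>M) = (\<Sum>j\<in>J. \<Sum>l\<in>J. c j * c l * measure M (AB v j l))"
    for v using AB
    by (simp add: Bochner_Integration.integral_cong[OF refl] integrable_real_indicator
        less_top[symmetric])
  moreover have "(\<integral>x. s x \<partial>M)\<^sup>2 = (\<Sum>j\<in>J. \<Sum>l\<in>J. c j * c l * (measure M (A j) * measure M (A l)))"
  proof -
    have "(\<integral>x. s x \<partial>M) = (\<Sum>j\<in>J. c j * measure M (A j))"
      unfolding s_def using A
      by (subst Bochner_Integration.integral_sum)
        (auto simp: less_top[symmetric] intro!: integrable_real_indicator)
    then show ?thesis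
      by (simp add: power2_eq_square sum_product algebra_simps)
  qed
  ultimately show ?thesis
    unfolding AB_def using A by (simp only:) (intro tendsto_sum tendsto_mult_left measure_shift_tendsto)
qed

lemma abs_correlation_diff_le:
  fixes g s :: "'a \<Rightarrow> real"
  assumes [measurable]: "g \<in> borel_measurable M" "s \<in> borel_measurable M"
    and gb: "\<And>x. x \<in> space M \<Longrightarrow> \<bar>g x\<bar> \<le> B" and sb: "\<And>x. x \<in> space M \<Longrightarrow> \<bar>s x\<bar> \<le> B + \<delta>"
    and gs: "\<And>x. x \<in> space M \<Longrightarrow> \<bar>g x - s x\<bar> \<le> \<delta>"
  shows "\<bar>(\<integral>x. g x * g (\<theta> v x) \<partial>M) - (\<integral>x. s x * s (\<theta> v x) \<partial>M)\<bar> \<le> \<delta> * (2 * B + \<delta>)"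
    and "\<bar>(\<integral>x. g x \<partial>M)\<^sup>2 - (\<integral>x. s x \<partial>M)\<^sup>2\<bar> \<le> \<delta> * (2 * B + \<delta>)"
proof -
  obtain x0 where "x0 \<in> space M" using not_empty by blast
  then have B: "B \<ge> 0" and \<delta>: "\<delta> \<ge> 0" using gb[of x0] gs[of x0] by linarith+
  have bounds: "\<bar>g x * g (\<theta> v x)\<bar> \<le> B * B" "\<bar>s x * s (\<theta> v x)\<bar> \<le> (B + \<delta>) * (B + \<delta>)"
    if "x \<in> space M" for x
    using that B \<delta> by (auto simp: abs_mult intro!: mult_mono gb sb shift_in_space)
  have "integrable M (\<lambda>x. g x * g (\<theta> v x))" "integrable M (\<lambda>x. s x * s (\<theta> v x))"
    by (rule integrable_bounded, measurable, erule bounds)+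
  then have "\<bar>(\<integral>x. g x * g (\<theta> v x) \<partial>M) - (\<integral>x. s x * s (\<theta> v x) \<partial>M)\<bar>
      = \<bar>\<integral>x. g x * g (\<theta> v x) - s x * s (\<theta> v x) \<partial>M\<bar>"
    by simp
  also have "\<dots> \<le> \<delta> * (2 * B + \<delta>)"
    by (rule abs_integral_le_bound) (auto intro!: abs_mult_sub_mult_le gs gb sb shift_in_space)
  finally show "\<bar>(\<integral>x. g x * g (\<theta> v x) \<partial>M) - (\<integral>x. s x * s (\<theta> v x) \<partial>M)\<bar> \<le> \<delta> * (2 * B + \<delta>)" .
  have "integrable M g" "integrable M s"
    by (rule integrable_bounded, measurable, erule gb sb)+
  then have "\<bar>(\<integral>x. g x \<partial>M) - (\<integral>x. s x \<partial>M)\<bar> = \<bar>\<integral>x. g x - s x \<partial>M\<bar>"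
    by simp
  also have "\<dots> \<le> \<delta>" by (rule abs_integral_le_bound) (auto intro: gs)
  finally show "\<bar>(\<integral>x. g x \<partial>M)\<^sup>2 - (\<integral>x. s x \<partial>M)\<^sup>2\<bar> \<le> \<delta> * (2 * B + \<delta>)"
    unfolding power2_eq_square
    by (intro abs_mult_sub_mult_le abs_integral_le_bound) (auto intro: gb sb)
qed

lemma correlation_tendsto:
  fixes g :: "'a \<Rightarrow> real"
  assumes gm[measurable]: "g \<in> borel_measurable M" and gb: "\<And>x. x \<in> space M \<Longrightarrow> \<bar>g x\<bar> \<le> B"
  shows "((\<lambda>v. \<integral>x. g x * g (\<theta> v x) \<partial>M) \<longlongrightarrow> (\<integral>x. g x \<partial>M)\<^sup>2) maxnorm_at_top"
proof (rule tendstoI)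
  fix e :: real assume e: "e > 0"
  obtain x0 where "x0 \<in> space M" using not_empty by blast
  then have B: "B \<ge> 0" using gb[of x0] by linarith
  define \<delta> where "\<delta> = min 1 (e / (8 * (2 * B + 1)))"
  have \<delta>: "\<delta> > 0" using e B by (simp add: \<delta>_def)
  have "\<delta> * (2 * B + \<delta>) \<le> \<delta> * (2 * B + 1)" using \<delta> by (simp add: \<delta>_def)
  also have "\<dots> \<le> e / (8 * (2 * B + 1)) * (2 * B + 1)"
    using B by (intro mult_right_mono) (auto simp: \<delta>_def)
  also have "\<dots> = e / 8" using B by (simp add: field_simps)
  finally have \<delta>_small: "\<delta> * (2 * B + \<delta>) \<le> e / 8" .
  obtain J A and c :: "int \<Rightarrow> real" where J: "finite J" and A[measurable]: "\<And>j. A j \<in> sets M"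
    and approx: "\<And>x. x \<in> space M \<Longrightarrow> \<bar>g x - (\<Sum>j\<in>J. c j * indicator (A j) x)\<bar> \<le> \<delta>"
    using simple_approx_bounded[OF gm gb \<delta>] by blast
  define s where "s x = (\<Sum>j\<in>J. c j * indicator (A j) x)" for x
  have sm[measurable]: "s \<in> borel_measurable M" unfolding s_def by measurable
  have gs: "\<bar>g x - s x\<bar> \<le> \<delta>" and sb: "\<bar>s x\<bar> \<le> B + \<delta>" if "x \<in> space M" for x
    using approx[OF that] gb[OF that] unfolding s_def by linarith+
  have "((\<lambda>v. \<integral>x. s x * s (\<theta> v x) \<partial>M) \<longlongrightarrow> (\<integral>x. s x \<partial>M)\<^sup>2) maxnorm_at_top"
    unfolding s_def using correlation_simple_tendsto[OF J, of A c] by simp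
  from tendstoD[OF this, of "e / 2"] e
  have "\<forall>\<^sub>F v in maxnorm_at_top. dist (\<integral>x. s x * s (\<theta> v x) \<partial>M) ((\<integral>x. s x \<partial>M)\<^sup>2) < e / 2"
    by simp
  then show "\<forall>\<^sub>F v in maxnorm_at_top. dist (\<integral>x. g x * g (\<theta> v x) \<partial>M) ((\<integral>x. g x \<partial>M)\<^sup>2) < e"
  proof (rule eventually_mono)
    fix v assume "dist (\<integral>x. s x * s (\<theta> v x) \<partial>M) ((\<integral>x. s x \<partial>M)\<^sup>2) < e / 2"
    with abs_correlation_diff_le(1)[OF gm sm gb sb gs, of v] abs_correlation_diff_le(2)[OF gm sm gb sb gs]
      \<delta>_small
    show "dist (\<integral>x. g x * g (\<theta> v x) \<partial>M) ((\<integral>x. g x \<partial>M)\<^sup>2) < e"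
      unfolding dist_real_def by linarith
  qed
qed

definition average :: "(nat \<Rightarrow> int ^ 'd) \<Rightarrow> nat \<Rightarrow> ('a \<Rightarrow> real) \<Rightarrow> 'a \<Rightarrow> real" where
  "average a n h x = (\<Sum>i<n. h (\<theta> (a i) x)) / real n"

lemma measurable_average [measurable]:
  assumes [measurable]: "h \<in> borel_measurable M"
  shows "average a n h \<in> borel_measurable M"
  unfolding average_def by measurable

lemma abs_average_le:
  assumes hb: "\<And>x. x \<in> space M \<Longrightarrow> \<bar>h x\<bar> \<le> C" and x: "x \<in> space M"
  shows "\<bar>average a n h x\<bar> \<le> C"
proof (cases "n = 0")
  case True
  then show ?thesis using hb[OF x] by (simp add: average_def)
next
  case False
  have "\<bar>\<Sum>i<n. h (\<theta> (a i) x)\<bar> \<le> (\<Sum>i<n. C)"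
    using x by (intro order_trans[OF sum_abs] sum_mono hb shift_in_space)
  then show ?thesis using False by (simp add: average_def divide_simps mult.commute)
qed

lemma average_diff_const:
  "n > 0 \<Longrightarrow> average a n (\<lambda>x. h x - c) x = average a n h x - c"
  by (simp add: average_def sum_subtractf field_simps)

lemma average_add: "average a n (\<lambda>x. g x + h x) x = average a n g x + average a n h x"
  by (simp add: average_def sum.distrib add_divide_distrib)

lemma integrable_average: "integrable M h \<Longrightarrow> integrable M (average a n h)"
  unfolding average_def by (auto intro!: integrable_divide integrable_sum integrable_shift)

lemma integral_average:
  assumes "integrable M h" "n > 0"
  shows "(\<integral>x. average a n h x \<partial>M) = (\<integral>x. h x \<partial>M)"
  using assms unfolding average_def
  by (simp add: Bochner_Integration.integral_sum integrable_shift integral_shift)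

lemma integral_square_average:
  fixes h :: "'a \<Rightarrow> real"
  assumes [measurable]: "h \<in> borel_measurable M" and hb: "\<And>x. x \<in> space M \<Longrightarrow> \<bar>h x\<bar> \<le> C"
  shows "(\<integral>x. (average a n h x)\<^sup>2 \<partial>M)
      = (\<Sum>i<n. \<Sum>j<n. \<integral>y. h y * h (\<theta> (a j - a i) y) \<partial>M) / (real n)\<^sup>2"
proof -
  have "integrable M (\<lambda>x. h (\<theta> (a i) x) * h (\<theta> (a j) x))" for i j
    by (rule integrable_bounded[where C="C * C"])
      (auto simp: abs_mult intro!: mult_mono hb shift_in_space order_trans[OF abs_ge_zero hb])
  then have "(\<integral>x. (average a n h x)\<^sup>2 \<partial>M)
      = (\<Sum>i<n. \<Sum>j<n. \<integral>x. h (\<theta> (a i) x) * h (\<theta> (a j) x) \<partial>M) / (real n)\<^sup>2"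
    by (simp add: average_def power_divide power2_eq_square sum_product
        Bochner_Integration.integral_sum integrable_sum)
  also have "\<dots> = (\<Sum>i<n. \<Sum>j<n. \<integral>y. h y * h (\<theta> (a j - a i) y) \<partial>M) / (real n)\<^sup>2"
  proof -
    have "(\<integral>x. h (\<theta> (a i) x) * h (\<theta> (a j) x) \<partial>M)
        = (\<integral>x. (\<lambda>y. h y * h (\<theta> (a j - a i) y)) (\<theta> (a i) x) \<partial>M)" for i j
      by (rule Bochner_Integration.integral_cong) (simp_all add: shift_shift)
    also have "\<dots> i j = (\<integral>y. h y * h (\<theta> (a j - a i) y) \<partial>M)" for i j
      by (rule integral_shift) measurable
    finally show ?thesis by simp
  qed
  finally show ?thesis .
qed

lemma integral_square_average_le:
  fixes h :: "'a \<Rightarrow> real"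
  assumes [measurable]: "h \<in> borel_measurable M" and hb: "\<And>x. x \<in> space M \<Longrightarrow> \<bar>h x\<bar> \<le> C"
    and h0: "(\<integral>x. h x \<partial>M) = 0" and e: "e > 0"
  obtains m :: nat where
    "\<And>a n. (\<integral>x. (average a n h x)\<^sup>2 \<partial>M) \<le> C\<^sup>2 * card (close_pairs a m n) / (real n)\<^sup>2 + e"
proof -
  define c where "c v = (\<integral>y. h y * h (\<theta> v y) \<partial>M)" for v
  have "(c \<longlongrightarrow> 0) maxnorm_at_top"
    using correlation_tendsto[OF assms(1) hb] h0 unfolding c_def by simp
  then obtain R where R: "\<And>v. maxnorm v \<ge> R \<Longrightarrow> \<bar>c v\<bar> < e"
    using tendstoD[of c 0 maxnorm_at_top e] e
    unfolding eventually_maxnorm_at_top dist_real_def by auto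
  obtain m :: nat where m: "\<And>v. maxnorm v > int m \<Longrightarrow> \<bar>c v\<bar> < e"
    by (intro that[of "nat R"] R) (auto split: if_splits)
  have c_le: "\<bar>c v\<bar> \<le> C\<^sup>2 * of_bool (maxnorm v \<le> int m) + e" for v
  proof (cases "maxnorm v \<le> int m")
    case True
    have "\<bar>c v\<bar> \<le> C * C" unfolding c_def
      by (rule abs_integral_le_bound)
        (auto simp: abs_mult intro!: mult_mono hb shift_in_space order_trans[OF abs_ge_zero hb])
    then show ?thesis using True e by (simp add: power2_eq_square)
  next
    case False
    then show ?thesis using m[of v] by simp
  qed
  have "(\<integral>x. (average a n h x)\<^sup>2 \<partial>M) \<le> C\<^sup>2 * card (close_pairs a m n) / (real n)\<^sup>2 + e"
    for a n
  proof (cases "n = 0")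
    case True
    then show ?thesis using e by (simp add: average_def)
  next
    case False
    have "(\<Sum>i<n. \<Sum>j<n. c (a j - a i))
        \<le> (\<Sum>i<n. \<Sum>j<n. C\<^sup>2 * of_bool (maxnorm (a j - a i) \<le> int m) + e)"
      by (intro sum_mono abs_le_D1[OF c_le])
    also have "\<dots> = C\<^sup>2 * card (close_pairs a m n) + e * (real n)\<^sup>2"
      by (simp add: sum.distrib sum_distrib_left[symmetric] sum_of_bool_close_pairs power2_eq_square
          del: sum_of_bool_eq)
    finally have "(\<Sum>i<n. \<Sum>j<n. c (a j - a i)) \<le> C\<^sup>2 * card (close_pairs a m n) + e * (real n)\<^sup>2" .
    moreover have "(\<integral>x. (average a n h x)\<^sup>2 \<partial>M) = (\<Sum>i<n. \<Sum>j<n. c (a j - a i)) / (real n)\<^sup>2"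
      unfolding c_def by (rule integral_square_average[OF assms(1) hb])
    ultimately show ?thesis
      using False by (simp add: divide_simps)
  qed
  then show ?thesis by (rule that)
qed

lemma integral_square_average_uniformly_small:
  fixes h :: "'a \<Rightarrow> real" and k :: "'t \<Rightarrow> nat \<Rightarrow> int ^ 'd"
  assumes [measurable]: "h \<in> borel_measurable M" and hb: "\<And>x. x \<in> space M \<Longrightarrow> \<bar>h x\<bar> \<le> C"
    and h0: "(\<integral>x. h x \<partial>M) = 0"
    and sparse: "sparse_returns I k"
    and \<epsilon>: "\<epsilon> > 0"
  shows "\<exists>N. \<forall>n\<ge>N. \<forall>t\<in>I. (\<integral>x. (average (k t) n h x)\<^sup>2 \<partial>M) \<le> \<epsilon>"
proof -
  obtain m where m: "\<And>a n. (\<integral>x. (average a n h x)\<^sup>2 \<partial>M)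
      \<le> C\<^sup>2 * card (close_pairs a m n) / (real n)\<^sup>2 + \<epsilon> / 2"
    using integral_square_average_le[OF assms(1) hb h0, of "\<epsilon> / 2"] \<epsilon> by auto
  define \<eta> where "\<eta> = \<epsilon> / (4 * (C\<^sup>2 + 1))"
  have C1: "C\<^sup>2 + 1 > 0" by (simp add: add_nonneg_pos)
  then have \<eta>: "\<eta> > 0" using \<epsilon> unfolding \<eta>_def by simp
  obtain N1 where N1: "\<And>n t. n \<ge> N1 \<Longrightarrow> t \<in> I \<Longrightarrow> real (card {(i, j). i \<in> {1..n} \<and> j \<in> {1..n} \<and>
      maxnorm (k t i - k t j) \<le> int m}) / (real n)\<^sup>2 < \<eta>"
    using SUP_ennreal_LIMSEQ_zeroD[OF sparse[unfolded sparse_returns_def, rule_format] \<eta>] by blast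
  obtain N2 :: nat where N2: "2 / \<eta> \<le> N2" using real_arch_simple by blast
  have "(\<integral>x. (average (k t) n h x)\<^sup>2 \<partial>M) \<le> \<epsilon>" if n: "n \<ge> max (max N1 N2) 1" and t: "t \<in> I" for n t
  proof -
    have n0: "real n > 0" using n by simp
    have "2 / \<eta> \<le> real n" using N2 n by (meson max.boundedE of_nat_le_iff order_trans)
    then have n_large: "2 / real n \<le> \<eta>"
      using n0 \<eta> by (simp add: divide_simps mult.commute)
    have "real (card (close_pairs (k t) m n)) / (real n)\<^sup>2 \<le> 2 * \<eta>"
      using close_pairs_fraction_le[of n "k t" m] n_large N1[OF _ t, of n] n by simp
    then have "C\<^sup>2 * card (close_pairs (k t) m n) / (real n)\<^sup>2 \<le> C\<^sup>2 * (2 * \<eta>)"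
      by (simp add: mult_left_mono times_divide_eq_right[symmetric] del: times_divide_eq_right)
    also have "\<dots> = \<epsilon> / 2 * (C\<^sup>2 / (C\<^sup>2 + 1))"
      using C1 unfolding \<eta>_def by (simp add: field_simps)
    also have "\<dots> \<le> \<epsilon> / 2"
      using \<epsilon> C1 by (intro mult_left_le) (auto simp: divide_le_eq_1)
    finally show ?thesis using m[of "k t" n] by linarith
  qed
  then show ?thesis by blast
qed

lemma integral_deviation_average_bounded:
  fixes g :: "'a \<Rightarrow> real" and k :: "'t \<Rightarrow> nat \<Rightarrow> int ^ 'd"
  assumes [measurable]: "g \<in> borel_measurable M" and gb: "\<And>x. x \<in> space M \<Longrightarrow> \<bar>g x\<bar> \<le> B"
    and sparse: "sparse_returns I k"
    and p: "p \<ge> 1" and \<tau>: "\<tau> > 0"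
  shows "\<exists>N. \<forall>n\<ge>N. \<forall>t\<in>I. (\<integral>x. \<bar>average (k t) n g x - (\<integral>y. g y \<partial>M)\<bar> powr p \<partial>M) \<le> \<tau>"
proof -
  define \<mu> where "\<mu> = (\<integral>y. g y \<partial>M)"
  define h where "h x = g x - \<mu>" for x
  define C where "C = 2 * B"
  have hm[measurable]: "h \<in> borel_measurable M" unfolding h_def by measurable
  have hb: "\<bar>h x\<bar> \<le> C" if "x \<in> space M" for x
    using gb[OF that] abs_integral_le_bound[OF assms(1) gb] unfolding h_def C_def \<mu>_def by linarith
  have "integrable M g" using integrable_bounded[OF assms(1) gb] .
  then have h0: "(\<integral>x. h x \<partial>M) = 0" unfolding h_def \<mu>_def by (simp add: prob_space)
  define \<eta> where "\<eta> = (\<tau> / 2) powr (1 / p)"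
  define D where "D = \<eta> powr (p - 2) + C powr (p - 2)"
  have \<eta>: "\<eta> > 0" "\<eta> powr p = \<tau> / 2" using \<tau> p by (simp_all add: \<eta>_def powr_powr)
  have D: "D \<ge> 0" by (simp add: D_def)
  obtain N where N: "\<And>n t. n \<ge> N \<Longrightarrow> t \<in> I \<Longrightarrow> (\<integral>x. (average (k t) n h x)\<^sup>2 \<partial>M) \<le> \<tau> / (2 * (D + 1))"
    using integral_square_average_uniformly_small[OF hm hb h0 sparse, of "\<tau> / (2 * (D + 1))"] \<tau> D
    by auto
  have "(\<integral>x. \<bar>average (k t) n g x - \<mu>\<bar> powr p \<partial>M) \<le> \<tau>" if n: "n \<ge> max N 1" and t: "t \<in> I" for n t
  proof -
    let ?X = "average (k t) n h"
    have X_le: "\<bar>?X x\<bar> powr p \<le> \<eta> powr p + D * (?X x)\<^sup>2" if "x \<in> space M" for x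
      unfolding D_def using abs_powr_le_square[OF p \<eta>(1) abs_average_le[OF hb that]] by simp
    have X2: "integrable M (\<lambda>x. (?X x)\<^sup>2)"
      by (rule integrable_bounded[where C="C\<^sup>2"])
        (simp_all add: abs_le_square_iff[symmetric] order_trans[OF abs_average_le[OF hb] abs_ge_self])
    have "(\<integral>x. \<bar>average (k t) n g x - \<mu>\<bar> powr p \<partial>M) = (\<integral>x. \<bar>?X x\<bar> powr p \<partial>M)"
      using n unfolding h_def by (simp add: average_diff_const)
    also have "\<dots> \<le> (\<integral>x. \<eta> powr p + D * (?X x)\<^sup>2 \<partial>M)"
      by (rule integral_mono') (use X2 X_le D in auto)
    also have "\<dots> = \<eta> powr p + D * (\<integral>x. (?X x)\<^sup>2 \<partial>M)"
      using X2 by (simp add: prob_space)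
    also have "\<dots> \<le> \<tau> / 2 + D * (\<tau> / (2 * (D + 1)))"
      using mult_left_mono[OF N[of n t] D] n t \<eta>(2) by simp
    also have "\<dots> \<le> \<tau>"
      using \<tau> D by (simp add: field_simps)
    finally show ?thesis .
  qed
  then show ?thesis unfolding \<mu>_def by blast
qed

lemma abs_deviation_average_powr_le:
  fixes f g :: "'a \<Rightarrow> real"
  assumes p: "p \<ge> 1" and n: "n > 0"
  shows "\<bar>average a n f x - \<mu>\<bar> powr p \<le> 3 powr (p - 1) *
    (average a n (\<lambda>x. \<bar>f x - g x\<bar> powr p) x + \<bar>average a n g x - \<nu>\<bar> powr p + \<bar>\<mu> - \<nu>\<bar> powr p)"
proof -
  let ?d = "\<lambda>x. f x - g x"
  have "average a n f x - \<mu> = average a n ?d x + (average a n g x - \<nu>) + - (\<mu> - \<nu>)"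
    using average_add[of a n ?d g x] by simp
  then have "\<bar>average a n f x - \<mu>\<bar> powr p
      \<le> 3 powr (p - 1) * (\<bar>average a n ?d x\<bar> powr p + \<bar>average a n g x - \<nu>\<bar> powr p + \<bar>- (\<mu> - \<nu>)\<bar> powr p)"
    by (simp only: abs_add3_powr_le[OF p])
  moreover have "\<bar>average a n ?d x\<bar> powr p \<le> average a n (\<lambda>x. \<bar>?d x\<bar> powr p) x"
    using abs_mean_powr_le[OF p, of "{..<n}" "\<lambda>i. ?d (\<theta> (a i) x)"] n by (auto simp: average_def)
  ultimately show ?thesis
    unfolding abs_minus_cancel by (meson add_right_mono mult_left_mono order_trans powr_ge_zero)
qed

lemma integral_deviation_average_le:
  fixes f g :: "'a \<Rightarrow> real"
  assumes p: "p \<ge> 1" and n: "n > 0" and f: "integrable M f"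
    and gm[measurable]: "g \<in> borel_measurable M" and gb: "\<And>x. x \<in> space M \<Longrightarrow> \<bar>g x\<bar> \<le> C"
    and fgp: "integrable M (\<lambda>x. \<bar>f x - g x\<bar> powr p)"
  shows "(\<integral>x. \<bar>average a n f x - (\<integral>y. f y \<partial>M)\<bar> powr p \<partial>M)
    \<le> 3 powr (p - 1) * ((\<integral>x. \<bar>f x - g x\<bar> powr p \<partial>M)
        + (\<integral>x. \<bar>average a n g x - (\<integral>y. g y \<partial>M)\<bar> powr p \<partial>M) + \<bar>\<integral>x. f x - g x \<partial>M\<bar> powr p)"
proof -
  have "integrable M g" by (rule integrable_bounded[OF gm gb])
  then have E_diff: "(\<integral>y. f y \<partial>M) - (\<integral>y. g y \<partial>M) = (\<integral>x. f x - g x \<partial>M)"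
    using f by simp
  have dev_g: "integrable M (\<lambda>x. \<bar>average a n g x - (\<integral>y. g y \<partial>M)\<bar> powr p)"
  proof (rule integrable_bounded[where C="(2 * C) powr p"])
    fix x assume x: "x \<in> space M"
    have "\<bar>average a n g x\<bar> \<le> C" by (intro abs_average_le gb x)
    moreover have "\<bar>\<integral>y. g y \<partial>M\<bar> \<le> C" by (intro abs_integral_le_bound gm gb)
    ultimately have "\<bar>average a n g x - (\<integral>y. g y \<partial>M)\<bar> \<le> 2 * C"
      using abs_triangle_ineq4[of "average a n g x" "\<integral>y. g y \<partial>M"] by linarith
    then show "\<bar>\<bar>average a n g x - (\<integral>y. g y \<partial>M)\<bar> powr p\<bar> \<le> (2 * C) powr p"
      using p by (simp add: powr_mono2)
  qed measurable
  define R where "R x = 3 powr (p - 1) * (average a n (\<lambda>x. \<bar>f x - g x\<bar> powr p) x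
      + \<bar>average a n g x - (\<integral>y. g y \<partial>M)\<bar> powr p + \<bar>\<integral>y. f y - g y \<partial>M\<bar> powr p)" for x
  have "integrable M R"
    unfolding R_def using integrable_average[OF fgp] dev_g by auto
  moreover have "0 \<le> R x" for x
    unfolding R_def average_def by (simp add: sum_nonneg)
  moreover have "\<bar>average a n f x - (\<integral>y. f y \<partial>M)\<bar> powr p \<le> R x" for x
    unfolding R_def E_diff[symmetric] by (rule abs_deviation_average_powr_le[OF p n])
  ultimately have "(\<integral>x. \<bar>average a n f x - (\<integral>y. f y \<partial>M)\<bar> powr p \<partial>M) \<le> (\<integral>x. R x \<partial>M)"
    by (intro integral_mono')
  also have "(\<integral>x. R x \<partial>M) = 3 powr (p - 1) * ((\<integral>x. \<bar>f x - g x\<bar> powr p \<partial>M)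
      + (\<integral>x. \<bar>average a n g x - (\<integral>y. g y \<partial>M)\<bar> powr p \<partial>M) + \<bar>\<integral>x. f x - g x \<partial>M\<bar> powr p)"
    unfolding R_def using fgp dev_g
    by (simp add: integral_average[OF fgp n] integrable_average[OF fgp] prob_space)
  finally show ?thesis .
qed

lemma integral_deviation_average_uniformly_small:
  fixes f :: "'a \<Rightarrow> real" and k :: "'t \<Rightarrow> nat \<Rightarrow> int ^ 'd"
  assumes sparse: "sparse_returns I k" and p: "p \<ge> 1"
    and fm: "f \<in> borel_measurable M" and fp: "integrable M (\<lambda>x. \<bar>f x\<bar> powr p)"
    and \<epsilon>: "\<epsilon> > 0"
  shows "\<exists>N. \<forall>n\<ge>N. \<forall>t\<in>I. (\<integral>x. \<bar>average (k t) n f x - (\<integral>y. f y \<partial>M)\<bar> powr p \<partial>M) \<le> \<epsilon>"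
proof -
  define \<tau> where "\<tau> = \<epsilon> / (3 * 3 powr (p - 1))"
  have \<tau>: "\<tau> > 0" using \<epsilon> by (simp add: \<tau>_def)
  obtain g C where gm: "g \<in> borel_measurable M" and gb: "\<And>x. \<bar>g x\<bar> \<le> C"
    and fg: "integrable M (\<lambda>x. \<bar>f x - g x\<bar> powr p)"
      "(\<integral>x. \<bar>f x - g x\<bar> powr p \<partial>M) < \<tau>" "\<bar>\<integral>x. f x - g x \<partial>M\<bar> powr p < \<tau>"
    using truncation_approx[OF p fm fp \<tau>] by blast
  have gb': "\<And>x. x \<in> space M \<Longrightarrow> \<bar>g x\<bar> \<le> C" using gb by blast
  obtain N where N: "\<And>n t. n \<ge> N \<Longrightarrow> t \<in> I \<Longrightarrow>
      (\<integral>x. \<bar>average (k t) n g x - (\<integral>y. g y \<partial>M)\<bar> powr p \<partial>M) \<le> \<tau>"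
    using integral_deviation_average_bounded[OF gm gb' sparse p \<tau>] by blast
  have "(\<integral>x. \<bar>average (k t) n f x - (\<integral>y. f y \<partial>M)\<bar> powr p \<partial>M) \<le> \<epsilon>"
    if n: "n \<ge> max N 1" and t: "t \<in> I" for n t
  proof -
    have "(\<integral>x. \<bar>average (k t) n f x - (\<integral>y. f y \<partial>M)\<bar> powr p \<partial>M)
      \<le> 3 powr (p - 1) * ((\<integral>x. \<bar>f x - g x\<bar> powr p \<partial>M)
        + (\<integral>x. \<bar>average (k t) n g x - (\<integral>y. g y \<partial>M)\<bar> powr p \<partial>M) + \<bar>\<integral>x. f x - g x \<partial>M\<bar> powr p)"
      using n by (intro integral_deviation_average_le[OF p _ _ gm gb' fg(1)]
          integrable_if_integrable_abs_powr[OF p fm fp]) auto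
    also have "\<dots> \<le> 3 powr (p - 1) * (\<tau> + \<tau> + \<tau>)"
      using fg(2,3) N[OF _ t, of n] n by (intro mult_left_mono add_mono) auto
    also have "\<dots> = \<epsilon>" by (simp add: \<tau>_def)
    finally show ?thesis .
  qed
  then show ?thesis by blast
qed

end

theorem theorem4p8:
  fixes M :: "'a measure" and \<theta> :: "int ^ 'd \<Rightarrow> 'a \<Rightarrow> 'a"
    and I :: "'t set" and k :: "'t \<Rightarrow> nat \<Rightarrow> int ^ 'd"
  assumes "prob_space M"
    and "dparam_group M \<theta>"
    and "strongly_mixing M \<theta>"
    and "\<And>m::nat. (\<lambda>n::nat. SUP t\<in>I. ennreal (real (card {(i, j). i \<in> {1..n} \<and> j \<in> {1..n} \<and>
              maxnorm (k t i - k t j) \<le> int m}) / (real n)\<^sup>2)) \<longlonglongrightarrow> 0"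
    and "1 \<le> p" and "in_Lp M p f"
  shows "(\<lambda>n::nat. SUP t\<in>I. ennreal (Lp_norm M p
            (\<lambda>x. (\<Sum>i<n. f (\<theta> (k t i) x)) / real n - prob_space.expectation M f))) \<longlonglongrightarrow> 0"
proof (rule SUP_ennreal_LIMSEQ_zeroI)
  interpret mixing_action M \<theta>
    by (intro mixing_action.intro mixing_action_axioms.intro assms(1-3))
  have sparse: "sparse_returns I k" using assms(4) by (simp add: sparse_returns_def)
  have fm: "f \<in> borel_measurable M" and fp: "integrable M (\<lambda>x. \<bar>f x\<bar> powr p)"
    using assms(6) by (simp_all add: in_Lp_def)
  fix \<epsilon> :: real assume \<epsilon>: "\<epsilon> > 0"
  obtain N where N: "\<And>n t. n \<ge> N \<Longrightarrow> t \<in> I \<Longrightarrow>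
      (\<integral>x. \<bar>average (k t) n f x - expectation f\<bar> powr p \<partial>M) \<le> \<epsilon> powr p"
    using integral_deviation_average_uniformly_small[OF sparse assms(5) fm fp, of "\<epsilon> powr p"] \<epsilon>
    by auto
  have "Lp_norm M p (\<lambda>x. average (k t) n f x - expectation f) \<le> \<epsilon>" if "n \<ge> N" "t \<in> I" for n t
  proof -
    have "Lp_norm M p (\<lambda>x. average (k t) n f x - expectation f) \<le> (\<epsilon> powr p) powr (1 / p)"
      unfolding Lp_norm_def using N[OF that] assms(5) by (intro powr_mono2) auto
    then show ?thesis using \<epsilon> assms(5) by (simp add: powr_powr)
  qed
  then show "\<exists>N. \<forall>n\<ge>N. \<forall>t\<in>I. Lp_norm M p (\<lambda>x. (\<Sum>i<n. f (\<theta> (k t i) x)) / real n - expectation f) \<le> \<epsilon>"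
    unfolding average_def by blast
qed

end
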